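(* Let $X$ be a crowded (dense-in-itself) topological space containing an open dense subset $D$ which is metrizable. Then $X$ is $Disc(X)$-selectively pseudocompact if and only if $X$ is $Nwd(X)$-selectively pseudocompact, where $Disc(X)$ is the family of discrete subsets of $X$ and $Nwd(X)$ the family of nowhere dense subsets of $X$.
   Context: For a topological space $X$ and $\mathcal A\subseteq\mathcal P(X)$, $X$ is called $\mathcal A$-selectively pseudocompact if for every sequence $\langle U_n:n\in\omega\rangle$ of pairwise disjoint non-empty open subsets of $X$ one can choose sets $A_n\in\mathcal A$ with $A_n\subseteq U_n$ such that the family $\{A_n:n\in\omega\}$ has an accumulation point, i.e. there is a point $x\in X$ every neighbourhood of which meets $A_n$ for infinitely many $n$. *)

theory Defs
  imports "HOL-Analysis.Analysis"
begin

definition crowded :: "'a topology \<Rightarrow> bool" where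
  "crowded X \<longleftrightarrow> (\<forall>x\<in>topspace X. \<not> openin X {x})"

definition Disc :: "'a topology \<Rightarrow> 'a set set" where
  "Disc X = {A. A \<subseteq> topspace X \<and> subtopology X A = discrete_topology A}"

definition Nwd :: "'a topology \<Rightarrow> 'a set set" where
  "Nwd X = {A. A \<subseteq> topspace X \<and> X interior_of (X closure_of A) = {}}"

definition accumulation_point_of_family :: "'a topology \<Rightarrow> 'a \<Rightarrow> (nat \<Rightarrow> 'a set) \<Rightarrow> bool" where
  "accumulation_point_of_family X x A \<longleftrightarrow>
     x \<in> topspace X \<and> (\<forall>V. openin X V \<and> x \<in> V \<longrightarrow> infinite {n. V \<inter> A n \<noteq> {}})"

definition selectively_pseudocompact :: "'a set set \<Rightarrow> 'a topology \<Rightarrow> bool" where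
  "selectively_pseudocompact \<A> X \<longleftrightarrow>
     (\<forall>U :: nat \<Rightarrow> 'a set.
        (\<forall>n. openin X (U n) \<and> U n \<noteq> {}) \<and> (\<forall>m n. m \<noteq> n \<longrightarrow> U m \<inter> U n = {}) \<longrightarrow>
        (\<exists>A :: nat \<Rightarrow> 'a set. (\<forall>n. A n \<in> \<A> \<and> A n \<subseteq> U n) \<and>
            (\<exists>x. accumulation_point_of_family X x A)))"

end

theory Submission
  imports Defs
begin

(* Both selection principles can be tested inside D: shrinking each U n to U n \<inter> D keeps the
   sequence admissible, and an accumulation point of sets A n is one of any sets B n with
   A n contained in the closure of B n.  A discrete subset of D is nowhere dense, since its
   points are not isolated in X while D is T1.  Conversely, a nowhere dense set A inside an
   open V \<subseteq> D lies in the closure of a discrete B \<subseteq> V: with rho the distance to A, take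
   in V minus the closure of A a maximal set whose distinct points satisfy
   min (rho b) (rho b') \<le> 2 d(b, b').  Such a set is discrete, and by maximality it comes
   within rho y / 2 of every point y, so it accumulates at every point of A. *)

lemma accumulation_point_of_family_closure_mono:
  assumes "accumulation_point_of_family X x A" and "\<And>n. A n \<subseteq> X closure_of B n"
  shows "accumulation_point_of_family X x B"
  unfolding accumulation_point_of_family_def
proof (intro conjI allI impI)
  show "x \<in> topspace X"
    using assms(1) by (simp add: accumulation_point_of_family_def)
  fix V assume V: "openin X V \<and> x \<in> V"
  have "V \<inter> B n \<noteq> {}" if "V \<inter> A n \<noteq> {}" for n
    using that V assms(2)[of n] openin_Int_closure_of_eq_empty[of X V "B n"] by blast
  then have "{n. V \<inter> A n \<noteq> {}} \<subseteq> {n. V \<inter> B n \<noteq> {}}"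
    by blast
  moreover have "infinite {n. V \<inter> A n \<noteq> {}}"
    using assms(1) V by (simp add: accumulation_point_of_family_def)
  ultimately show "infinite {n. V \<inter> B n \<noteq> {}}"
    using infinite_super by blast
qed

lemma selectively_pseudocompact_refine:
  assumes D: "openin X D" "X closure_of D = topspace X"
    and sp: "selectively_pseudocompact \<A> X"
    and refine: "\<And>A V. \<lbrakk>A \<in> \<A>; openin X V; V \<subseteq> D; A \<subseteq> V\<rbrakk>
                   \<Longrightarrow> \<exists>B\<in>\<B>. B \<subseteq> V \<and> A \<subseteq> X closure_of B"
  shows "selectively_pseudocompact \<B> X"
  unfolding selectively_pseudocompact_def
proof (intro allI impI)
  fix U :: "nat \<Rightarrow> 'a set"
  assume U: "(\<forall>n. openin X (U n) \<and> U n \<noteq> {}) \<and> (\<forall>m n. m \<noteq> n \<longrightarrow> U m \<inter> U n = {})"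
  have open_UD: "openin X (U n \<inter> D)" for n
    using U D(1) by blast
  moreover have "U n \<inter> D \<noteq> {}" for n
    using U D(2)[unfolded dense_intersects_open, rule_format, of "U n"] by blast
  moreover have "\<forall>m n. m \<noteq> n \<longrightarrow> (U m \<inter> D) \<inter> (U n \<inter> D) = {}"
    using U by blast
  ultimately obtain A x where A: "\<And>n. A n \<in> \<A> \<and> A n \<subseteq> U n \<inter> D"
    and x: "accumulation_point_of_family X x A"
    using sp[unfolded selectively_pseudocompact_def, rule_format, of "\<lambda>n. U n \<inter> D"] by blast
  have "\<exists>B\<in>\<B>. B \<subseteq> U n \<inter> D \<and> A n \<subseteq> X closure_of B" for n
    using refine[of "A n" "U n \<inter> D"] A open_UD by blast
  then obtain B where B: "\<And>n. B n \<in> \<B> \<and> B n \<subseteq> U n \<inter> D \<and> A n \<subseteq> X closure_of B n"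
    by metis
  then have "accumulation_point_of_family X x B"
    using accumulation_point_of_family_closure_mono[OF x] by blast
  then show "\<exists>B. (\<forall>n. B n \<in> \<B> \<and> B n \<subseteq> U n) \<and> (\<exists>x. accumulation_point_of_family X x B)"
    using B by blast
qed

lemma Disc_imp_Nwd:
  assumes crowded: "crowded X" and D: "openin X D" "t1_space (subtopology X D)"
    and A: "A \<in> Disc X" "A \<subseteq> D"
  shows "A \<in> Nwd X"
proof -
  let ?W = "X interior_of (X closure_of A)"
  have meets_A: "V \<inter> A \<noteq> {}" if "openin X V" "V \<noteq> {}" "V \<subseteq> X closure_of A" for V
    using that openin_Int_closure_of_eq_empty[of X V A] by blast
  have "?W = {}"
  proof (rule ccontr)
    assume "?W \<noteq> {}"
    then obtain a where a: "a \<in> A" "a \<in> ?W"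
      using meets_A[of ?W] interior_of_subset[of X "X closure_of A"] by auto
    have "openin (subtopology X A) {a}"
      using A(1) a(1) by (simp add: Disc_def)
    then obtain T where T: "openin X T" "T \<inter> A = {a}"
      unfolding openin_subtopology by auto
    let ?O = "?W \<inter> D \<inter> T"
    have O: "openin X ?O" "a \<in> ?O"
      using D(1) T a A(2) by (auto intro!: openin_Int)
    have "openin (subtopology X D) ?O"
      using O(1) by (auto simp: openin_open_subtopology[OF D(1)])
    then have "openin (subtopology X D) (?O - {a})"
      using D(2) unfolding t1_space_openin_delete_alt by blast
    then have "openin X (?O - {a})"
      by (simp add: openin_open_subtopology[OF D(1)])
    moreover have "?O - {a} \<noteq> {}"
    proof
      assume "?O - {a} = {}"
      then have "openin X {a}"
        using O by (metis Diff_eq_empty_iff insert_absorb subset_singletonD)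
      then show False
        using crowded openin_subset by (fastforce simp: crowded_def)
    qed
    moreover have "?O - {a} \<subseteq> X closure_of A"
      using interior_of_subset[of X "X closure_of A"] by blast
    ultimately obtain a' where "a' \<in> ?O - {a}" "a' \<in> A"
      using meets_A by blast
    then show False
      using T(2) by blast
  qed
  then show ?thesis
    using A(1) by (simp add: Disc_def Nwd_def)
qed

lemma maximal_pairwise_subset:
  "\<exists>B \<subseteq> S. pairwise R B \<and> (\<forall>y \<in> S - B. \<not> pairwise R (insert y B))"
proof -
  have "\<Union>\<C> \<in> {B. B \<subseteq> S \<and> pairwise R B}" if "\<C> \<in> chains {B. B \<subseteq> S \<and> pairwise R B}" for \<C>
  proof -
    have "\<C> \<subseteq> {B. B \<subseteq> S \<and> pairwise R B}" "chain\<^sub>\<subseteq> \<C>"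
      using that by (simp_all add: chains_def)
    then show ?thesis
      using pairwise_chain_Union[of \<C> R] by blast
  qed
  from Zorn_Lemma[OF ballI[OF this]] obtain B where B: "B \<in> {B. B \<subseteq> S \<and> pairwise R B}"
    and max: "\<forall>B'\<in>{B. B \<subseteq> S \<and> pairwise R B}. B \<subseteq> B' \<longrightarrow> B' = B" ..
  have "\<not> pairwise R (insert y B)" if "y \<in> S - B" for y
    using that B max by blast
  then show ?thesis
    using B by blast
qed

definition (in Metric_space) minfdist :: "'a \<Rightarrow> 'a set \<Rightarrow> real" where
  "minfdist x A = (INF a\<in>A. d x a)"

lemma (in Metric_space) minfdist_le: "a \<in> A \<Longrightarrow> minfdist x A \<le> d x a"
  unfolding minfdist_def by (rule cINF_lower) (auto intro: bdd_belowI2[where m=0] nonneg)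

lemma (in Metric_space) minfdist_le_add:
  assumes "A \<noteq> {}" "A \<subseteq> M" "x \<in> M" "y \<in> M"
  shows "minfdist x A \<le> d x y + minfdist y A"
proof -
  have "minfdist x A - d x y \<le> d y a" if "a \<in> A" for a
    using minfdist_le[OF that, of x] triangle[of x y a] assms that by auto
  then have "minfdist x A - d x y \<le> minfdist y A"
    unfolding minfdist_def[of y] by (rule cINF_greatest[OF assms(1)])
  then show ?thesis
    by simp
qed

lemma (in Metric_space) minfdist_pos:
  assumes "A \<noteq> {}" "A \<subseteq> M" "x \<in> M - mtopology closure_of A"
  shows "0 < minfdist x A"
proof -
  have "openin mtopology (M - mtopology closure_of A)"
    by (metis closedin_closure_of openin_diff openin_topspace topspace_mtopology)
  then obtain r where r: "r > 0" "mball x r \<subseteq> M - mtopology closure_of A"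
    using assms(3) unfolding openin_mtopology by blast
  have "r \<le> d x a" if "a \<in> A" for a
  proof -
    have "a \<in> mtopology closure_of A"
      using that assms(2) closure_of_subset[of A mtopology] by auto
    then have "a \<notin> mball x r"
      using r(2) by blast
    then show ?thesis
      using that assms by auto
  qed
  then have "r \<le> minfdist x A"
    unfolding minfdist_def by (rule cINF_greatest[OF assms(1)])
  then show ?thesis
    using r(1) by linarith
qed

lemma (in Metric_space) weighted_separated_imp_discrete:
  assumes "B \<subseteq> M" and pos: "\<And>b. b \<in> B \<Longrightarrow> 0 < \<rho> b"
    and lip: "\<And>x y. x \<in> M \<Longrightarrow> y \<in> M \<Longrightarrow> \<rho> x \<le> d x y + \<rho> y"
    and sep: "pairwise (\<lambda>b b'. min (\<rho> b) (\<rho> b') \<le> 2 * d b b') B"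
  shows "subtopology mtopology B = discrete_topology B"
proof -
  have "mball b (\<rho> b / 4) \<inter> B = {b}" if b: "b \<in> B" for b
  proof -
    have "b' = b" if b': "b' \<in> B" "d b b' < \<rho> b / 4" for b'
    proof (rule ccontr)
      assume "b' \<noteq> b"
      then have "min (\<rho> b) (\<rho> b') \<le> 2 * d b b'"
        using sep b b'(1) by (simp add: pairwise_def)
      moreover have "\<rho> b \<le> d b b' + \<rho> b'"
        using lip assms(1) b b'(1) by blast
      ultimately show False
        using pos[OF b] b'(2) by (simp add: min_def split: if_splits)
    qed
    then show ?thesis
      using b assms(1) pos[OF b] by auto
  qed
  then have "openin (subtopology mtopology B) {b}" if "b \<in> B" for b
    using that openin_mball unfolding openin_subtopology by metis
  then show ?thesis
    using assms(1) by (subst eq_commute) (auto simp: discrete_topology_unique)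
qed

lemma (in Metric_space) nowhere_dense_subset_closure_of_discrete:
  assumes U: "openin mtopology U" and AU: "A \<subseteq> U"
    and nwd: "mtopology interior_of (mtopology closure_of A) = {}"
  shows "\<exists>B \<subseteq> U. subtopology mtopology B = discrete_topology B \<and> A \<subseteq> mtopology closure_of B"
proof (cases "A = {}")
  case True
  have "subtopology mtopology {} = discrete_topology {}"
    by (simp add: subtopology_eq_discrete_topology_empty)
  then show ?thesis
    using True by blast
next
  case False
  have UM: "U \<subseteq> M" and AM: "A \<subseteq> M"
    using U AU openin_mtopology by auto
  define \<rho> where "\<rho> x = minfdist x A" for x
  define G where "G = U - mtopology closure_of A"
  define R where "R b b' \<longleftrightarrow> min (\<rho> b) (\<rho> b') \<le> 2 * d b b'" for b b'
  obtain B where B: "B \<subseteq> G" "pairwise R B"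
    and max: "\<And>y. y \<in> G - B \<Longrightarrow> \<not> pairwise R (insert y B)"
    using maximal_pairwise_subset[of G R] by blast
  have BM: "B \<subseteq> M"
    using B(1) UM G_def by blast
  have "subtopology mtopology B = discrete_topology B"
  proof (rule weighted_separated_imp_discrete[OF BM])
    show "0 < \<rho> b" if "b \<in> B" for b
      unfolding \<rho>_def using that B(1) UM G_def False AM by (intro minfdist_pos) auto
    show "\<rho> x \<le> d x y + \<rho> y" if "x \<in> M" "y \<in> M" for x y
      unfolding \<rho>_def by (rule minfdist_le_add[OF False AM that])
    show "pairwise (\<lambda>b b'. min (\<rho> b) (\<rho> b') \<le> 2 * d b b') B"
      using B(2) unfolding R_def .
  qed
  moreover have "\<exists>b\<in>B. d a b < r" if a: "a \<in> A" and r: "r > 0" for a r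
  proof -
    have "openin mtopology (mball a (r/2) \<inter> U)" "a \<in> mball a (r/2) \<inter> U"
      using U a AU AM r by auto
    then have "\<not> mball a (r/2) \<inter> U \<subseteq> mtopology closure_of A"
      using nwd unfolding interior_of_eq_empty by blast
    then obtain y where "y \<in> mball a (r/2) \<inter> U" "y \<notin> mtopology closure_of A"
      by blast
    then have y: "y \<in> G" "d a y < r/2"
      unfolding G_def by auto
    have yM: "y \<in> M"
      using y(1) UM G_def by blast
    have "\<exists>b\<in>B. d y b < r/2"
    proof (cases "y \<in> B")
      case True
      then show ?thesis
        using r yM by (intro bexI[of _ y]) auto
    next
      case False
      then obtain b where b: "b \<in> B" "\<not> R y b \<or> \<not> R b y"
        using max[of y] y(1) B(2) by (auto simp: pairwise_insert)
      then have "d y b < \<rho> y / 2"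
        using BM yM commute[of y b] by (auto simp: R_def min_def split: if_splits)
      moreover have "\<rho> y \<le> d y a"
        unfolding \<rho>_def using a by (rule minfdist_le)
      ultimately show ?thesis
        using r y(2) commute[of y a] by (intro bexI[OF _ b(1)]) linarith
    qed
    then obtain b where b: "b \<in> B" "d y b < r/2"
      by blast
    moreover have "d a b \<le> d a y + d y b"
      using triangle a AM yM b(1) BM by blast
    ultimately show ?thesis
      using y(2) by (intro bexI[OF _ b(1)]) linarith
  qed
  then have "A \<subseteq> mtopology closure_of B"
    using AM BM by (fastforce simp: metric_closure_of)
  ultimately show ?thesis
    using B(1) G_def by blast
qed

lemma Nwd_subset_closure_of_Disc:
  assumes D: "openin X D" "metrizable_space (subtopology X D)"
    and A: "A \<in> Nwd X" and V: "openin X V" "V \<subseteq> D" "A \<subseteq> V"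
  shows "\<exists>B\<in>Disc X. B \<subseteq> V \<and> A \<subseteq> X closure_of B"
proof -
  obtain M d where Md: "Metric_space M d" and MD: "Metric_space.mtopology M d = subtopology X D"
    using D(2) unfolding metrizable_space_def by metis
  interpret Metric_space M d
    by (fact Md)
  have "mtopology interior_of (mtopology closure_of A) \<subseteq> X interior_of (X closure_of A)"
    unfolding MD closure_of_subtopology_open[OF disjI1, OF D(1)] interior_of_subtopology_open[OF D(1)]
    using interior_of_mono[of "D \<inter> X closure_of A" "X closure_of A" X] by blast
  then have nwd: "mtopology interior_of (mtopology closure_of A) = {}"
    using A by (simp add: Nwd_def)
  have "openin mtopology V"
    using V D(1) by (simp add: MD openin_open_subtopology)
  then obtain B where B: "B \<subseteq> V" "subtopology mtopology B = discrete_topology B"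
    and AB: "A \<subseteq> mtopology closure_of B"
    using nowhere_dense_subset_closure_of_discrete[OF _ V(3) nwd] by blast
  have "subtopology X B = discrete_topology B"
    using B V(2) by (simp add: MD subtopology_subtopology inf.absorb2)
  moreover have "B \<subseteq> topspace X"
    using B(1) V(1) openin_subset by blast
  ultimately have "B \<in> Disc X"
    by (simp add: Disc_def)
  moreover have "mtopology closure_of B \<subseteq> X closure_of B"
    unfolding MD by (rule closure_of_subtopology_subset)
  ultimately show ?thesis
    using B(1) AB by blast
qed

theorem proposition1p6:
  fixes X :: "'a topology" and D :: "'a set"
  assumes "crowded X"
    and "openin X D" and "X closure_of D = topspace X"
    and "metrizable_space (subtopology X D)"
  shows "selectively_pseudocompact (Disc X) X \<longleftrightarrow> selectively_pseudocompact (Nwd X) X"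
proof
  assume "selectively_pseudocompact (Disc X) X"
  then show "selectively_pseudocompact (Nwd X) X"
  proof (rule selectively_pseudocompact_refine[OF assms(2,3)])
    fix A V assume A: "A \<in> Disc X" and V: "openin X V" "V \<subseteq> D" "A \<subseteq> V"
    have "A \<in> Nwd X"
      using V by (intro Disc_imp_Nwd[OF assms(1,2) metrizable_imp_t1_space[OF assms(4)] A]) blast
    moreover have "A \<subseteq> X closure_of A"
      using A by (simp add: Disc_def closure_of_subset)
    ultimately show "\<exists>B\<in>Nwd X. B \<subseteq> V \<and> A \<subseteq> X closure_of B"
      using V(3) by blast
  qed
next
  assume "selectively_pseudocompact (Nwd X) X"
  then show "selectively_pseudocompact (Disc X) X"
    using Nwd_subset_closure_of_Disc[OF assms(2,4)]
    by (rule selectively_pseudocompact_refine[OF assms(2,3)])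
qed

end
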